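(* Let $G$ be the visibility graph of a funnel with chains $L=\{\lambda_0,\dots,\lambda_{n_L}\}$ and $R=\{\rho_0,\dots,\rho_{n_R}\}$. Let $W:=L_\ell\cup R_r$ be a base (with $0\le \ell\le n_L$, $0\le r\le n_R$), and let $d(\ell)\in N[\lambda_\ell]$ and $d(r)\in N[\rho_r]$ be two vertices of $G$. Then at least one of the sets $W\setminus N[d(\ell)]$, $W\setminus N[d(r)]$, or $W\setminus (N[d(\ell)]\cup N[d(r)])$ is a base.
   Context: A terrain is an $x$-monotone polygonal chain given by finitely many vertices with distinct $x$-coordinates; two vertices $p$ (left) and $q$ (right) see each other if every terrain vertex strictly between them in $x$-order lies strictly below segment $pq$; the visibility graph has an edge for every pair that sees each other. An interior terrain vertex is convex if its two chain-neighbors see each other. A funnel is a terrain with exactly one convex vertex (the bottom) whose leftmost and rightmost vertices see each other. The chains: $L=\{\lambda_0,\dots,\lambda_{n_L}\}$ are the bottom and the vertices left of it, $R=\{\rho_0,\dots,\rho_{n_R}\}$ the bottom and the vertices right of it, each ordered by increasing $y$-coordinate, so $\lambda_0=\rho_0$ is the bottom. For integers $-1\le \ell\le n_L$ and $-1\le r\le n_R$ let $L_\ell:=\{\lambda_0,\dots,\lambda_\ell\}$ and $R_r:=\{\rho_0,\dots,\rho_r\}$ (with $L_{-1}=R_{-1}=\emptyset$). A vertex set $U$ is a base if $U=L_\ell\cup R_r$ for some such $\ell,r$. $N[v]$ is the closed neighborhood in $G$. *)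

theory Defs
  imports Complex_Main
begin

definition terrain :: "(nat \<Rightarrow> real \<times> real) \<Rightarrow> nat \<Rightarrow> bool" where
  "terrain p n \<longleftrightarrow> (\<forall>i j. i < j \<and> j \<le> n \<longrightarrow> fst (p i) < fst (p j))"

definition below_seg :: "(nat \<Rightarrow> real \<times> real) \<Rightarrow> nat \<Rightarrow> nat \<Rightarrow> nat \<Rightarrow> bool" where
  "below_seg p i j k \<longleftrightarrow>
     snd (p k) < snd (p i) + (snd (p j) - snd (p i)) * (fst (p k) - fst (p i)) / (fst (p j) - fst (p i))"

definition sees :: "(nat \<Rightarrow> real \<times> real) \<Rightarrow> nat \<Rightarrow> nat \<Rightarrow> bool" where
  "sees p i j \<longleftrightarrow> i < j \<and> (\<forall>k. i < k \<and> k < j \<longrightarrow> below_seg p i j k)"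

definition vis_edge :: "(nat \<Rightarrow> real \<times> real) \<Rightarrow> nat \<Rightarrow> nat \<Rightarrow> nat \<Rightarrow> bool" where
  "vis_edge p n u v \<longleftrightarrow> u \<le> n \<and> v \<le> n \<and> (sees p u v \<or> sees p v u)"

definition closed_nbhd :: "(nat \<Rightarrow> real \<times> real) \<Rightarrow> nat \<Rightarrow> nat \<Rightarrow> nat set" where
  "closed_nbhd p n v = {u. u \<le> n \<and> v \<le> n \<and> (u = v \<or> vis_edge p n u v)}"

definition convex_vertex :: "(nat \<Rightarrow> real \<times> real) \<Rightarrow> nat \<Rightarrow> nat \<Rightarrow> bool" where
  "convex_vertex p n k \<longleftrightarrow> 0 < k \<and> k < n \<and> sees p (k - 1) (k + 1)"

definition funnel :: "(nat \<Rightarrow> real \<times> real) \<Rightarrow> nat \<Rightarrow> nat \<Rightarrow> bool" where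
  "funnel p n b \<longleftrightarrow> terrain p n \<and> {k. convex_vertex p n k} = {b} \<and> sees p 0 n"

text \<open>Chains: lambda_i = b - i (i = 0..b, so n_L = b), rho_i = b + i (i = 0..n-b,
  so n_R = n - b).  L_l = {lambda_0..lambda_l}, R_r = {rho_0..rho_r}, with l, r = -1
  giving the empty set.\<close>
definition chainL :: "nat \<Rightarrow> int \<Rightarrow> nat set" where
  "chainL b l = {k. k \<le> b \<and> int (b - k) \<le> l}"

definition chainR :: "nat \<Rightarrow> int \<Rightarrow> nat set" where
  "chainR b r = {k. b \<le> k \<and> int (k - b) \<le> r}"

definition is_base :: "nat \<Rightarrow> nat \<Rightarrow> nat set \<Rightarrow> bool" where
  "is_base n b U \<longleftrightarrow> (\<exists>l r. -1 \<le> l \<and> l \<le> int b \<and> -1 \<le> r \<and> r \<le> int (n - b) \<and>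
                          U = chainL b l \<union> chainR b r)"

end

theory Submission
  imports Defs
begin

text \<open>Every vertex other than the bottom is reflex, so the two chains are concave and
  no two non-adjacent vertices of the same chain see each other: all interesting edges
  cross the bottom. These crossing edges are order-convex in each endpoint and can be
  uncrossed: if u' \<le> u < b < v \<le> v' and both u v' and u' v are edges, then so are
  u v and u' v'. From these properties alone it follows that N[d(l)] meets L_l in a
  segment starting at its outer end, that N[d(r)] does the same on R_r, and that when
  neither neighbourhood also does this on the other chain, their union does it on both
  chains. Removing such a set from W leaves a base. Mirroring the funnel swaps the two
  chains, which halves the case analysis.\<close>

definition slope :: "(nat \<Rightarrow> real \<times> real) \<Rightarrow> nat \<Rightarrow> nat \<Rightarrow> real" where
  "slope p i j = (snd (p j) - snd (p i)) / (fst (p j) - fst (p i))"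

lemma slope_times_run:
  "fst (p i) \<noteq> fst (p j) \<Longrightarrow> slope p i j * (fst (p j) - fst (p i)) = snd (p j) - snd (p i)"
  unfolding slope_def by simp

lemma three_slopes:
  assumes "fst (p i) < fst (p k)" "fst (p k) < fst (p j)"
  shows "slope p i k < slope p i j \<longleftrightarrow> slope p i k < slope p k j"
    and "slope p i j < slope p k j \<longleftrightarrow> slope p i k < slope p k j"
    and "slope p i j < slope p i k \<longleftrightarrow> slope p k j < slope p i k"
    and "slope p k j < slope p i j \<longleftrightarrow> slope p k j < slope p i k"
proof -
  define a c where "a = fst (p k) - fst (p i)" and "c = fst (p j) - fst (p k)"
  have "0 < a" "0 < c"
    using assms by (simp_all add: a_def c_def)
  \<comment> \<open>the slope over the whole interval is the weighted mean of the two partial slopes\<close>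
  have mean: "slope p i j * (a + c) = slope p i k * a + slope p k j * c"
    using assms slope_times_run[of p i j] slope_times_run[of p i k] slope_times_run[of p k j]
    by (simp add: a_def c_def algebra_simps)
  have "sgn ((slope p i j - slope p i k) * (a + c)) = sgn ((slope p k j - slope p i k) * c)"
    using mean by (simp add: algebra_simps)
  then have left: "sgn (slope p i j - slope p i k) = sgn (slope p k j - slope p i k)"
    using \<open>0 < a\<close> \<open>0 < c\<close> by (simp add: sgn_mult)
  have "sgn ((slope p k j - slope p i j) * (a + c)) = sgn ((slope p k j - slope p i k) * a)"
    using mean by (simp add: algebra_simps)
  then have right: "sgn (slope p k j - slope p i j) = sgn (slope p k j - slope p i k)"
    using \<open>0 < a\<close> \<open>0 < c\<close> by (simp add: sgn_mult)
  show "slope p i k < slope p i j \<longleftrightarrow> slope p i k < slope p k j"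
    and "slope p i j < slope p k j \<longleftrightarrow> slope p i k < slope p k j"
    and "slope p i j < slope p i k \<longleftrightarrow> slope p k j < slope p i k"
    and "slope p k j < slope p i j \<longleftrightarrow> slope p k j < slope p i k"
    using left right by (auto simp: sgn_real_def split: if_splits)
qed

lemma below_seg_iff_slope_less:
  assumes "fst (p i) < fst (p k)" "fst (p i) < fst (p j)"
  shows "below_seg p i j k \<longleftrightarrow> slope p i k < slope p i j"
proof -
  have "below_seg p i j k \<longleftrightarrow> slope p i k * (fst (p k) - fst (p i)) < slope p i j * (fst (p k) - fst (p i))"
    using assms slope_times_run[of p i k] by (simp add: below_seg_def slope_def, linarith)
  also have "\<dots> \<longleftrightarrow> slope p i k < slope p i j"
    using assms by simp
  finally show ?thesis .
qed

locale terrain_chain =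
  fixes p :: "nat \<Rightarrow> real \<times> real" and n :: nat
  assumes is_terrain: "terrain p n"
begin

lemma x_less: "i < j \<Longrightarrow> j \<le> n \<Longrightarrow> fst (p i) < fst (p j)"
  using is_terrain unfolding terrain_def by blast

lemma three_slopes_at:
  assumes "i < k" "k < j" "j \<le> n"
  shows "slope p i k < slope p i j \<longleftrightarrow> slope p i k < slope p k j"
    and "slope p i j < slope p k j \<longleftrightarrow> slope p i k < slope p k j"
    and "slope p i j < slope p i k \<longleftrightarrow> slope p k j < slope p i k"
    and "slope p k j < slope p i j \<longleftrightarrow> slope p k j < slope p i k"
  using three_slopes[of p i k j] x_less assms by auto

lemma below_seg_iff:
  "i < k \<Longrightarrow> i < j \<Longrightarrow> j \<le> n \<Longrightarrow> k \<le> n \<Longrightarrow> below_seg p i j k \<longleftrightarrow> slope p i k < slope p i j"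
  by (rule below_seg_iff_slope_less) (auto intro: x_less)

lemma sees_slope_less:
  "sees p u v \<Longrightarrow> u < k \<Longrightarrow> k < v \<Longrightarrow> v \<le> n \<Longrightarrow> slope p u k < slope p u v"
  unfolding sees_def using below_seg_iff by auto

definition concave_on :: "nat \<Rightarrow> nat \<Rightarrow> bool" where
  "concave_on u v \<longleftrightarrow> (\<forall>k. u < k \<and> k < v \<longrightarrow> slope p k (k + 1) \<le> slope p (k - 1) k)"

lemma concave_on_subinterval: "concave_on u v \<Longrightarrow> u \<le> u' \<Longrightarrow> v' \<le> v \<Longrightarrow> concave_on u' v'"
  unfolding concave_on_def by auto

lemma concave_on_edge_slope_antimono:
  "concave_on u v \<Longrightarrow> u \<le> i \<Longrightarrow> i \<le> j \<Longrightarrow> j < v \<Longrightarrow> slope p j (j + 1) \<le> slope p i (i + 1)"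
proof (induction j)
  case 0
  then show ?case by simp
next
  case (Suc j)
  show ?case
  proof (cases "i = Suc j")
    case False
    then have "u < Suc j" "Suc j < v"
      using Suc.prems by auto
    then have "slope p (Suc j) (Suc j + 1) \<le> slope p j (Suc j)"
      using Suc.prems(1) unfolding concave_on_def by (auto dest: spec[of _ "Suc j"])
    moreover have "slope p j (j + 1) \<le> slope p i (i + 1)"
      using Suc False by auto
    ultimately show ?thesis by simp
  qed simp
qed

lemma concave_on_last_edge_le:
  "concave_on u v \<Longrightarrow> u < v \<Longrightarrow> v \<le> n \<Longrightarrow> slope p (v - 1) v \<le> slope p u v"
proof (induction v)
  case 0
  then show ?case by simp
next
  case (Suc v)
  show ?case
  proof (cases "u = v")
    case False
    then have "u < v" using Suc by auto
    have "slope p (v - 1) v \<le> slope p u v"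
      using Suc \<open>u < v\<close> concave_on_subinterval[of u "Suc v" u v] by auto
    moreover have "slope p v (v + 1) \<le> slope p (v - 1) v"
      using Suc.prems \<open>u < v\<close> unfolding concave_on_def by auto
    ultimately show ?thesis
      using three_slopes_at(2)[of u v "v + 1"] \<open>u < v\<close> Suc.prems by auto
  qed simp
qed

lemma concave_on_chord_le_first_edge:
  "concave_on u v \<Longrightarrow> u < v \<Longrightarrow> v \<le> n \<Longrightarrow> slope p u v \<le> slope p u (u + 1)"
proof (induction v)
  case 0
  then show ?case by simp
next
  case (Suc v)
  show ?case
  proof (cases "u = v")
    case False
    then have "u < v" using Suc by auto
    have "slope p u v \<le> slope p u (u + 1)"
      using Suc \<open>u < v\<close> concave_on_subinterval[of u "Suc v" u v] by auto
    moreover have "slope p v (v + 1) \<le> slope p u (u + 1)"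
      using concave_on_edge_slope_antimono[of u "Suc v" u v] Suc.prems \<open>u < v\<close> by auto
    ultimately show ?thesis
      using three_slopes_at(1,2)[of u v "v + 1"] \<open>u < v\<close> Suc.prems by (auto simp: not_less)
  qed simp
qed

lemma concave_on_consecutive_chords:
  assumes "concave_on u w" "u < v" "v < w" "w \<le> n"
  shows "slope p v w \<le> slope p u v"
proof -
  have "slope p (v - 1) v \<le> slope p u v"
    using concave_on_last_edge_le[of u v] assms concave_on_subinterval[of u w u v] by auto
  moreover have "slope p v w \<le> slope p v (v + 1)"
    using concave_on_chord_le_first_edge[of v w] assms concave_on_subinterval[of u w v w] by auto
  moreover have "slope p v (v + 1) \<le> slope p (v - 1) v"
    using assms unfolding concave_on_def by auto
  ultimately show ?thesis by auto
qed

lemma concave_on_not_sees: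
  assumes "concave_on u v" "u + 2 \<le> v" "v \<le> n"
  shows "\<not> sees p u v"
proof
  assume "sees p u v"
  then have "slope p u (u + 1) < slope p u v"
    using sees_slope_less assms by auto
  moreover have "slope p u v \<le> slope p u (u + 1)"
    using concave_on_chord_le_first_edge assms by auto
  ultimately show False by simp
qed

end

locale funnel_terrain =
  fixes p :: "nat \<Rightarrow> real \<times> real" and n b :: nat
  assumes is_funnel: "funnel p n b"
begin

sublocale terrain_chain p n
  using is_funnel by unfold_locales (simp add: funnel_def)

lemma bottom: "0 < b" "b < n" "sees p (b - 1) (b + 1)"
proof -
  have "convex_vertex p n b"
    using is_funnel unfolding funnel_def by blast
  then show "0 < b" "b < n" "sees p (b - 1) (b + 1)"
    unfolding convex_vertex_def by auto
qed

lemma reflex_vertex: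
  assumes "0 < k" "k < n" "k \<noteq> b"
  shows "slope p k (k + 1) \<le> slope p (k - 1) k"
proof -
  have "\<not> sees p (k - 1) (k + 1)"
    using is_funnel assms unfolding funnel_def convex_vertex_def by auto
  moreover have "below_seg p (k - 1) (k + 1) k \<Longrightarrow> sees p (k - 1) (k + 1)"
    using assms unfolding sees_def by (auto simp: less_Suc_eq)
  ultimately have "\<not> slope p (k - 1) k < slope p (k - 1) (k + 1)"
    using below_seg_iff[of "k - 1" k "k + 1"] assms by auto
  then show ?thesis
    using three_slopes_at(1)[of "k - 1" k "k + 1"] assms by auto
qed

lemma concave_on_side: "v \<le> n \<Longrightarrow> v \<le> b \<or> b \<le> u \<Longrightarrow> concave_on u v"
  unfolding concave_on_def using reflex_vertex by auto

lemma sees_across_iff: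
  assumes "u < b" "b < v" "v \<le> n"
  shows "sees p u v \<longleftrightarrow> slope p u (u + 1) < slope p u v \<and> slope p u v < slope p (v - 1) v"
proof
  assume "sees p u v"
  then have "slope p u (u + 1) < slope p u v" "slope p u (v - 1) < slope p u v"
    using sees_slope_less assms by auto
  then show "slope p u (u + 1) < slope p u v \<and> slope p u v < slope p (v - 1) v"
    using three_slopes_at(1,2)[of u "v - 1" v] assms by auto
next
  assume slopes: "slope p u (u + 1) < slope p u v \<and> slope p u v < slope p (v - 1) v"
  show "sees p u v"
    unfolding sees_def
  proof (intro conjI allI impI)
    show "u < v" using assms by simp
    fix k assume k: "u < k \<and> k < v"
    show "below_seg p u v k"
    proof (cases "k \<le> b")
      case True
      then have "slope p u k \<le> slope p u (u + 1)"
        using concave_on_chord_le_first_edge[of u k] concave_on_side[of k u] k assms by auto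
      then show ?thesis
        using slopes k assms by (subst below_seg_iff) auto
    next
      case False
      then have "slope p (v - 1) v \<le> slope p k v"
        using concave_on_last_edge_le[of k v] concave_on_side[of v k] k assms by auto
      then have "slope p u k < slope p u v"
        using slopes three_slopes_at(1,2)[of u k v] k assms by auto
      then show ?thesis
        using k assms by (subst below_seg_iff) auto
    qed
  qed
qed

definition across :: "nat \<Rightarrow> nat \<Rightarrow> bool" where
  "across u v \<longleftrightarrow> u < b \<and> b < v \<and> v \<le> n \<and> sees p u v"

lemma across_iff:
  "across u v \<longleftrightarrow> u < b \<and> b < v \<and> v \<le> n \<and>
     slope p u (u + 1) < slope p u v \<and> slope p u v < slope p (v - 1) v"
  unfolding across_def using sees_across_iff by blast

lemma across_bounds: "across u v \<Longrightarrow> u < b \<and> b < v \<and> v \<le> n"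
  unfolding across_def by simp

lemma across_right_convex:
  assumes "across u v1" "across u v3" "v1 \<le> v2" "v2 \<le> v3"
  shows "across u v2"
proof (cases "v2 = v1 \<or> v2 = v3")
  case False
  then have lt: "v1 < v2" "v2 < v3" using assms by auto
  have bounds: "u < b" "b < v1" "v3 \<le> n"
    using assms across_bounds by auto
  have first1: "slope p u (u + 1) < slope p u v1" and first3: "slope p u (u + 1) < slope p u v3"
    using assms unfolding across_iff by auto
  have "slope p u v2 < slope p u v3"
    using sees_slope_less[of u v3 v2] assms(2) lt bounds unfolding across_def by auto
  then have chord_u: "slope p u v2 < slope p v2 v3"
    using three_slopes_at(1)[of u v2 v3] lt bounds by auto
  have "slope p (v2 - 1) v3 \<le> slope p (v2 - 1) v2"
    using concave_on_chord_le_first_edge[of "v2 - 1" v3] concave_on_side[of v3 "v2 - 1"] lt bounds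
    by auto
  then have "slope p v2 v3 \<le> slope p (v2 - 1) v2"
    using three_slopes_at(1)[of "v2 - 1" v2 v3] lt bounds by auto
  with chord_u have last: "slope p u v2 < slope p (v2 - 1) v2"
    by simp
  have first: "slope p u (u + 1) < slope p u v2"
  proof (rule ccontr)
    assume "\<not> ?thesis"
    moreover have "slope p v2 v3 \<le> slope p v1 v2"
      using concave_on_consecutive_chords[of v1 v3 v2] concave_on_side[of v3 v1] lt bounds by auto
    ultimately show False
      using first1 first3 three_slopes_at(3,4)[of u v1 v2] three_slopes_at(3)[of u v2 v3] lt bounds
      by linarith
  qed
  show ?thesis
    unfolding across_iff using first last bounds lt by auto
qed (use assms in auto)

lemma across_left_convex:
  assumes "across u1 v" "across u3 v" "u1 \<le> u2" "u2 \<le> u3"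
  shows "across u2 v"
proof (cases "u2 = u1 \<or> u2 = u3")
  case False
  then have lt: "u1 < u2" "u2 < u3" using assms by auto
  have bounds: "u3 < b" "b < v" "v \<le> n"
    using assms across_bounds by auto
  have last1: "slope p u1 v < slope p (v - 1) v" and last3: "slope p u3 v < slope p (v - 1) v"
    using assms unfolding across_iff by auto
  have "slope p u2 (u2 + 1) \<le> slope p u1 (u2 + 1)"
    using concave_on_last_edge_le[of u1 "u2 + 1"] concave_on_side[of "u2 + 1" u1] lt bounds by auto
  then have edge_u2: "slope p u2 (u2 + 1) \<le> slope p u1 u2"
    using three_slopes_at(2)[of u1 u2 "u2 + 1"] lt bounds by auto
  have "slope p u1 u2 < slope p u1 v"
    using sees_slope_less[of u1 v u2] assms(1) lt bounds unfolding across_def by auto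
  then have "slope p u1 u2 < slope p u2 v"
    using three_slopes_at(1)[of u1 u2 v] lt bounds by auto
  with edge_u2 have first: "slope p u2 (u2 + 1) < slope p u2 v"
    by simp
  have last: "slope p u2 v < slope p (v - 1) v"
  proof (rule ccontr)
    assume "\<not> ?thesis"
    moreover have "slope p u2 u3 \<le> slope p u1 u2"
      using concave_on_consecutive_chords[of u1 u3 u2] concave_on_side[of u3 u1] lt bounds by auto
    ultimately show False
      using last1 last3 three_slopes_at(3,4)[of u2 u3 v] three_slopes_at(4)[of u1 u2 v] lt bounds
      by linarith
  qed
  show ?thesis
    unfolding across_iff using first last bounds lt by auto
qed (use assms in auto)

lemma across_uncross:
  assumes "u' \<le> u" "v \<le> v'" "across u v'" "across u' v"
  shows "across u v \<and> across u' v'"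
proof (cases "u' = u \<or> v = v'")
  case False
  then have lt: "u' < u" "v < v'" using assms by auto
  have bounds: "u < b" "b < v" "v' \<le> n"
    using assms across_bounds by auto
  have last: "slope p u v' < slope p (v' - 1) v'" and first: "slope p u' (u' + 1) < slope p u' v"
    using assms unfolding across_iff by auto
  have "slope p u (u + 1) \<le> slope p u' (u + 1)"
    using concave_on_last_edge_le[of u' "u + 1"] concave_on_side[of "u + 1" u'] lt bounds by auto
  then have first_uv: "slope p u (u + 1) \<le> slope p u' u"
    using three_slopes_at(2)[of u' u "u + 1"] lt bounds by auto
  have "slope p u' u < slope p u' v"
    using sees_slope_less[of u' v u] assms(4) lt bounds unfolding across_def by auto
  then have left_u: "slope p u' u < slope p u v" "slope p u' v < slope p u v"
    using three_slopes_at(1,2)[of u' u v] lt bounds by auto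
  have "slope p u v < slope p u v'"
    using sees_slope_less[of u v' v] assms(3) lt bounds unfolding across_def by auto
  then have right_v: "slope p u v < slope p v v'" "slope p u v < slope p u v'"
    using three_slopes_at(1)[of u v v'] lt bounds by auto
  have "slope p (v - 1) v' \<le> slope p (v - 1) v"
    using concave_on_chord_le_first_edge[of "v - 1" v'] concave_on_side[of v' "v - 1"] lt bounds
    by auto
  then have last_uv: "slope p v v' \<le> slope p (v - 1) v"
    using three_slopes_at(1)[of "v - 1" v v'] lt bounds by auto
  have "across u v"
    unfolding across_iff using first_uv left_u right_v last_uv lt bounds by auto
  moreover have "slope p u' (u' + 1) < slope p u' v'"
    using first left_u right_v three_slopes_at(1)[of u' v v'] lt bounds by auto
  moreover have "slope p u' v' < slope p (v' - 1) v'"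
    using last left_u right_v three_slopes_at(2)[of u' u v'] lt bounds by auto
  ultimately show ?thesis
    unfolding across_iff using lt bounds by auto
qed (use assms in auto)

lemma sees_iff_adjacent_or_across:
  assumes "u < v" "v \<le> n"
  shows "sees p u v \<longleftrightarrow> v = u + 1 \<or> across u v"
proof (cases "v = u + 1")
  case False
  then have "sees p u v \<Longrightarrow> u < b \<and> b < v"
    using concave_on_not_sees[of u v] concave_on_side[of v u] assms by fastforce
  then show ?thesis
    using assms False unfolding across_def by auto
qed (auto simp: sees_def)

end

definition left_closed :: "nat \<Rightarrow> nat \<Rightarrow> nat set \<Rightarrow> bool" where
  "left_closed b A X \<longleftrightarrow> (\<forall>k\<in>X. \<forall>j. A \<le> j \<and> j \<le> k \<and> k \<le> b \<longrightarrow> j \<in> X)"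

definition right_closed :: "nat \<Rightarrow> nat \<Rightarrow> nat set \<Rightarrow> bool" where
  "right_closed b B X \<longleftrightarrow> (\<forall>k\<in>X. \<forall>j. b \<le> k \<and> k \<le> j \<and> j \<le> B \<longrightarrow> j \<in> X)"

lemma mem_reflect_image:
  fixes n :: nat
  assumes "S \<subseteq> {..n}"
  shows "u \<in> (\<lambda>x. n - x) ` S \<longleftrightarrow> u \<le> n \<and> n - u \<in> S"
proof
  assume "u \<in> (\<lambda>x. n - x) ` S"
  then obtain x where "x \<in> S" "x \<le> n" "u = n - x"
    using assms by auto
  then show "u \<le> n \<and> n - u \<in> S"
    by simp
next
  assume "u \<le> n \<and> n - u \<in> S"
  then show "u \<in> (\<lambda>x. n - x) ` S"
    by (intro image_eqI[of _ _ "n - u"]) auto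
qed

lemma right_closed_reflect:
  assumes "X \<subseteq> {..n}" "b \<le> n" "B \<le> n"
  shows "right_closed b B X \<longleftrightarrow> left_closed (n - b) (n - B) ((\<lambda>x. n - x) ` X)"
proof
  assume R: "right_closed b B X"
  show "left_closed (n - b) (n - B) ((\<lambda>x. n - x) ` X)"
    unfolding left_closed_def
  proof (intro ballI allI impI)
    fix k j assume "k \<in> (\<lambda>x. n - x) ` X" "n - B \<le> j \<and> j \<le> k \<and> k \<le> n - b"
    then obtain x where x: "x \<in> X" "k = n - x" and bounds: "n - B \<le> j" "j \<le> k" "k \<le> n - b"
      by blast
    have "x \<le> n"
      using x assms(1) by auto
    then have "b \<le> x" "x \<le> n - j" "n - j \<le> B"
      using x bounds assms by linarith+
    then have "n - j \<in> X"
      using R x unfolding right_closed_def by blast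
    then show "j \<in> (\<lambda>x. n - x) ` X"
      using bounds x by (intro image_eqI[of _ _ "n - j"]) auto
  qed
next
  assume L: "left_closed (n - b) (n - B) ((\<lambda>x. n - x) ` X)"
  show "right_closed b B X"
    unfolding right_closed_def
  proof (intro ballI allI impI)
    fix k j assume "k \<in> X" and bounds: "b \<le> k \<and> k \<le> j \<and> j \<le> B"
    then have "n - k \<in> (\<lambda>x. n - x) ` X" "n - B \<le> n - j" "n - j \<le> n - k" "n - k \<le> n - b"
      by auto
    then have "n - j \<in> (\<lambda>x. n - x) ` X"
      using L unfolding left_closed_def by blast
    then have "n - (n - j) \<in> X"
      using mem_reflect_image[OF assms(1)] by blast
    then show "j \<in> X"
      using assms bounds by simp
  qed
qed

lemma reflect_image_reflect_image:
  fixes n :: nat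
  assumes "X \<subseteq> {..n}"
  shows "(\<lambda>x. n - x) ` (\<lambda>x. n - x) ` X = X"
  using assms by (force simp: image_image image_iff)

lemma left_closed_reflect:
  assumes "X \<subseteq> {..n}" "b \<le> n" "A \<le> n"
  shows "left_closed b A X \<longleftrightarrow> right_closed (n - b) (n - A) ((\<lambda>x. n - x) ` X)"
  using right_closed_reflect[of "(\<lambda>x. n - x) ` X" n "n - b" "n - A"] assms
  by (simp add: reflect_image_reflect_image image_subset_iff)

lemma right_closed_unionI:
  assumes "right_closed b B Y" "\<And>k j. k \<in> X \<Longrightarrow> b \<le> k \<Longrightarrow> k \<le> j \<Longrightarrow> j \<le> B \<Longrightarrow> j \<in> X \<union> Y"
  shows "right_closed b B (X \<union> Y)"
  using assms unfolding right_closed_def by blast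

lemma right_closed_union_cover: "{b..B} \<subseteq> Y \<Longrightarrow> right_closed b B (X \<union> Y)"
  unfolding right_closed_def by (auto simp: subset_iff)

text \<open>The guard v \<le> n keeps the truncated subtraction n - v from identifying
  out-of-range vertices with 0.\<close>
definition reflect_rel :: "nat \<Rightarrow> (nat \<Rightarrow> nat \<Rightarrow> bool) \<Rightarrow> nat \<Rightarrow> nat \<Rightarrow> bool" where
  "reflect_rel n R u v \<longleftrightarrow> v \<le> n \<and> R (n - v) (n - u)"

locale funnel_graph =
  fixes n b :: nat and across :: "nat \<Rightarrow> nat \<Rightarrow> bool"
  assumes across_bounds: "across u v \<Longrightarrow> u < b \<and> b < v \<and> v \<le> n"
    and across_bottom: "across (b - 1) (b + 1)"
    and across_right_convex: "across u v1 \<Longrightarrow> across u v3 \<Longrightarrow> v1 \<le> v2 \<Longrightarrow> v2 \<le> v3 \<Longrightarrow> across u v2"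
    and across_left_convex: "across u1 v \<Longrightarrow> across u3 v \<Longrightarrow> u1 \<le> u2 \<Longrightarrow> u2 \<le> u3 \<Longrightarrow> across u2 v"
    and across_uncross:
      "u' \<le> u \<Longrightarrow> v \<le> v' \<Longrightarrow> across u v' \<Longrightarrow> across u' v \<Longrightarrow> across u v \<and> across u' v'"
begin

definition nbhd :: "nat \<Rightarrow> nat set" where
  "nbhd d = {u. u \<le> n \<and> d \<le> n \<and> (u \<le> d + 1 \<and> d \<le> u + 1 \<or> across u d \<or> across d u)}"

lemma bottom_bounds: "0 < b" "b < n"
  using across_bounds[OF across_bottom] by auto

lemma nbhd_subset: "nbhd d \<subseteq> {..n}"
  unfolding nbhd_def by auto

lemma nbhd_memD: "u \<in> nbhd d \<Longrightarrow> u \<le> n \<and> d \<le> n"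
  unfolding nbhd_def by simp

lemma across_in_nbhd: "across u v \<Longrightarrow> u \<in> nbhd v \<and> v \<in> nbhd u"
  using across_bounds unfolding nbhd_def by fastforce

lemma adjacent_in_nbhd: "u \<le> n \<Longrightarrow> d \<le> n \<Longrightarrow> u \<le> d + 1 \<Longrightarrow> d \<le> u + 1 \<Longrightarrow> u \<in> nbhd d"
  unfolding nbhd_def by auto

lemma nbhd_far_right: "k \<in> nbhd d \<Longrightarrow> d + 1 < k \<Longrightarrow> across d k"
  using across_bounds[of k d] unfolding nbhd_def by auto

lemma nbhd_far_left: "k \<in> nbhd d \<Longrightarrow> k + 1 < d \<Longrightarrow> across k d"
  using across_bounds[of d k] unfolding nbhd_def by auto

lemma nbhd_same_side:
  "k \<in> nbhd d \<Longrightarrow> b \<le> k \<and> b \<le> d \<or> k \<le> b \<and> d \<le> b \<Longrightarrow> k \<le> d + 1 \<and> d \<le> k + 1"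
  using across_bounds[of k d] across_bounds[of d k] unfolding nbhd_def by auto

lemma funnel_graph_reflect: "funnel_graph n (n - b) (reflect_rel n across)"
proof
  fix u v
  assume "reflect_rel n across u v"
  then show "u < n - b \<and> n - b < v \<and> v \<le> n"
    using across_bounds[of "n - v" "n - u"] unfolding reflect_rel_def by auto
next
  show "reflect_rel n across (n - b - 1) (n - b + 1)"
    using across_bottom bottom_bounds unfolding reflect_rel_def
    by (simp add: Suc_diff_Suc numeral_2_eq_2)
next
  fix u v1 v2 v3
  assume "reflect_rel n across u v1" "reflect_rel n across u v3" "v1 \<le> v2" "v2 \<le> v3"
  then show "reflect_rel n across u v2"
    using across_left_convex[of "n - v3" "n - u" "n - v1" "n - v2"] unfolding reflect_rel_def by auto
next
  fix u1 u2 u3 v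
  assume "reflect_rel n across u1 v" "reflect_rel n across u3 v" "u1 \<le> u2" "u2 \<le> u3"
  then show "reflect_rel n across u2 v"
    using across_right_convex[of "n - v" "n - u3" "n - u1" "n - u2"] unfolding reflect_rel_def by auto
next
  fix u u' v v'
  assume "u' \<le> u" "v \<le> v'" "reflect_rel n across u v'" "reflect_rel n across u' v"
  then show "reflect_rel n across u v \<and> reflect_rel n across u' v'"
    using across_uncross[of "n - v'" "n - v" "n - u" "n - u'"] unfolding reflect_rel_def by auto
qed

lemma nbhd_reflect:
  assumes "d \<le> n"
  shows "funnel_graph.nbhd n (reflect_rel n across) (n - d) = (\<lambda>x. n - x) ` nbhd d"
proof -
  have "u \<in> funnel_graph.nbhd n (reflect_rel n across) (n - d) \<longleftrightarrow> u \<le> n \<and> n - u \<in> nbhd d" for u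
    using assms unfolding funnel_graph.nbhd_def[OF funnel_graph_reflect] nbhd_def reflect_rel_def
    by auto
  then show ?thesis
    using mem_reflect_image[OF nbhd_subset] by blast
qed

lemma left_closed_nbhd:
  assumes "A \<le> b" "dl \<in> nbhd A"
  shows "left_closed b A (nbhd dl)"
  unfolding left_closed_def
proof (intro ballI allI impI)
  fix k j assume k: "k \<in> nbhd dl" and kj: "A \<le> j \<and> j \<le> k \<and> k \<le> b"
  have "dl \<le> n"
    using assms(2) nbhd_memD by simp
  show "j \<in> nbhd dl"
  proof (cases "across A dl")
    case True
    consider "k + 1 < dl" | "k = b" "dl = b + 1"
      using across_bounds[OF True] kj by fastforce
    then show ?thesis
    proof cases
      case 1
      then show ?thesis
        using across_left_convex[OF True nbhd_far_left[OF k]] kj across_in_nbhd by blast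
    next
      case 2
      then have "across A (b + 1)"
        using True by simp
      then show ?thesis
        using 2 across_left_convex[OF _ across_bottom, of A j] kj across_in_nbhd
          adjacent_in_nbhd[of j dl] bottom_bounds \<open>dl \<le> n\<close>
        by (cases "j = b") auto
    qed
  next
    case False
    then have "dl \<le> A + 1"
      using assms across_bounds[of dl A] unfolding nbhd_def by auto
    moreover have "k \<le> dl + 1"
      using nbhd_far_right[OF k] across_bounds[of dl k] kj by fastforce
    ultimately show ?thesis
      using adjacent_in_nbhd[of j dl] kj \<open>dl \<le> n\<close> bottom_bounds by auto
  qed
qed

lemma right_closed_nbhd:
  assumes "b \<le> B" "B \<le> n" "dr \<in> nbhd B"
  shows "right_closed b B (nbhd dr)"
proof -
  interpret reflected: funnel_graph n "n - b" "reflect_rel n across"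
    by (rule funnel_graph_reflect)
  have "dr \<le> n"
    using assms(3) nbhd_memD by simp
  have "n - dr \<in> reflected.nbhd (n - B)"
    using assms nbhd_reflect[of B] nbhd_subset by (auto simp: mem_reflect_image)
  then have "left_closed (n - b) (n - B) (reflected.nbhd (n - dr))"
    using reflected.left_closed_nbhd assms(1) by simp
  then show ?thesis
    using right_closed_reflect[OF nbhd_subset] nbhd_reflect[OF \<open>dr \<le> n\<close>] assms bottom_bounds by simp
qed

lemma not_left_closed_nbhd_far:
  assumes "d \<le> b" "\<not> left_closed b A (nbhd d)"
  shows "A + 2 \<le> d"
proof -
  obtain k j where "k \<in> nbhd d" "j \<notin> nbhd d" "A \<le> j" "j \<le> k" "k \<le> b"
    using assms(2) unfolding left_closed_def by blast
  moreover from this have "d \<le> k + 1" "k \<le> d + 1" "k \<le> n" "d \<le> n"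
    using nbhd_same_side assms(1) nbhd_memD by auto
  ultimately have "\<not> d \<le> j + 1"
    using adjacent_in_nbhd[of j d] by auto
  then show ?thesis
    using \<open>A \<le> j\<close> by simp
qed

lemma not_right_closed_nbhd_far:
  assumes "b \<le> d" "B \<le> n" "\<not> right_closed b B (nbhd d)"
  shows "d + 2 \<le> B"
proof -
  obtain k j where "k \<in> nbhd d" "j \<notin> nbhd d" "b \<le> k" "k \<le> j" "j \<le> B"
    using assms(3) unfolding right_closed_def by blast
  moreover from this have "k \<le> d + 1" "d \<le> k + 1" "d \<le> n"
    using nbhd_same_side assms(1) nbhd_memD by auto
  ultimately have "\<not> j \<le> d + 1"
    using adjacent_in_nbhd[of j d] assms(2) by auto
  then show ?thesis
    using \<open>j \<le> B\<close> by simp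
qed

lemma union_right_closed_crossing:
  assumes "across dr dl" "across dr B"
  shows "right_closed b B (nbhd dl \<union> nbhd dr)"
proof (rule right_closed_unionI)
  show "right_closed b B (nbhd dr)"
    using right_closed_nbhd across_in_nbhd[OF assms(2)] across_bounds[OF assms(2)] by simp
next
  fix k j assume k: "k \<in> nbhd dl" "b \<le> k" "k \<le> j" "j \<le> B"
  have "b < dl" "dl \<le> n" "B \<le> n"
    using across_bounds assms by auto
  then have "dl \<le> k + 1"
    using nbhd_same_side[OF k(1)] k by simp
  show "j \<in> nbhd dl \<union> nbhd dr"
  proof (cases "j \<le> dl + 1")
    case True
    then show ?thesis
      using adjacent_in_nbhd[of j dl] \<open>dl \<le> k + 1\<close> k \<open>dl \<le> n\<close> \<open>B \<le> n\<close> by simp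
  next
    case False
    then have "across dr j"
      using across_right_convex[OF assms, of j] k by simp
    then show ?thesis
      using across_in_nbhd by blast
  qed
qed

lemma union_right_closed_outside:
  assumes "across dr B" "dl < dr"
  shows "right_closed b B (nbhd dl \<union> nbhd dr)"
proof (rule right_closed_unionI)
  show "right_closed b B (nbhd dr)"
    using right_closed_nbhd across_in_nbhd[OF assms(1)] across_bounds[OF assms(1)] by simp
next
  fix k j assume k: "k \<in> nbhd dl" "b \<le> k" "k \<le> j" "j \<le> B"
  have "dr < b"
    using across_bounds assms(1) by simp
  then have "across dl k"
    using nbhd_far_right[OF k(1)] assms(2) k(2) by simp
  then have "across dr k"
    using across_uncross[of dl dr k B] assms k by simp
  then have "across dr j"
    using across_right_convex[OF _ assms(1)] k by simp
  then show "j \<in> nbhd dl \<union> nbhd dr"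
    using across_in_nbhd by blast
qed

lemma union_right_closed_adjacent:
  assumes "dr \<in> nbhd B" "b \<le> B" "B \<le> dr + 1" "across m dr" "dl \<le> m"
  shows "right_closed b B (nbhd dl \<union> nbhd dr)"
proof (rule right_closed_unionI)
  have "B \<le> n" "dr \<le> n"
    using nbhd_memD assms(1) by auto
  then show "right_closed b B (nbhd dr)"
    using right_closed_nbhd assms by simp
next
  fix k j assume k: "k \<in> nbhd dl" "b \<le> k" "k \<le> j" "j \<le> B"
  consider "j = k" | "dr < j" | "k < j" "j \<le> dr"
    using k(3) by linarith
  then show "j \<in> nbhd dl \<union> nbhd dr"
  proof cases
    case 1
    then show ?thesis using k by simp
  next
    case 2
    then show ?thesis
      using adjacent_in_nbhd[of j dr] k assms nbhd_memD[OF assms(1)] by simp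
  next
    case 3
    have "m < b"
      using across_bounds assms(4) by simp
    have "across dl j"
    proof (cases "dl + 1 < k")
      case True
      then have "across dl k"
        using nbhd_far_right k by simp
      moreover from this have "across dl dr"
        using across_uncross[of dl m k dr] assms k 3 by simp
      ultimately show ?thesis
        using across_right_convex[of dl k dr j] 3 k by simp
    next
      case False
      \<comment> \<open>then the bottom edge from b - 1 takes the place of the edge from dl to k\<close>
      then have "k = b" "dl = b - 1" "m = b - 1"
        using \<open>m < b\<close> k(2) assms(5) by linarith+
      then show ?thesis
        using across_right_convex[OF across_bottom, of dr j] assms(4) 3 by simp
    qed
    then show ?thesis
      using across_in_nbhd by blast
  qed
qed

lemma left_closed_nbhd_across:
  assumes "across A dl" "dl \<le> dr" "b + 1 < dr"
  shows "left_closed b A (nbhd dr)"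
  unfolding left_closed_def
proof (intro ballI allI impI)
  fix k j assume k: "k \<in> nbhd dr" "A \<le> j \<and> j \<le> k \<and> k \<le> b"
  then have "across k dr"
    using nbhd_far_left assms(3) by simp
  then have "across A dr"
    using across_uncross[of A k dl dr] assms k by simp
  then have "across j dr"
    using across_left_convex[OF _ \<open>across k dr\<close>] k by simp
  then show "j \<in> nbhd dr"
    using across_in_nbhd by blast
qed

lemma not_left_closed_nbhd_across:
  assumes "\<not> left_closed b A (nbhd d)" "b + 1 < d"
  obtains m where "A < m" "across m d"
proof -
  obtain k j where "k \<in> nbhd d" "j \<notin> nbhd d" "A \<le> j" "j \<le> k" "k \<le> b"
    using assms(1) unfolding left_closed_def by blast
  then have "A < k" "across k d"
    using nbhd_far_left assms(2) by (auto simp: le_less)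
  then show ?thesis
    using that by blast
qed

lemma union_right_closed:
  assumes "A \<le> b" "b \<le> B" "B \<le> n" "dl \<in> nbhd A" "dr \<in> nbhd B"
    and not_right: "\<not> right_closed b B (nbhd dl)" and not_left: "\<not> left_closed b A (nbhd dr)"
  shows "right_closed b B (nbhd dl \<union> nbhd dr)"
proof -
  have "across A dl \<or> dl \<le> A + 1" "across dr B \<or> B \<le> dr + 1"
    using assms(1,2,4,5) across_bounds[of dl A] across_bounds[of B dr] unfolding nbhd_def by auto
  then consider (crossing) "across A dl" "across dr B" | (mixed) "across A dl" "B \<le> dr + 1"
    | (outside) "dl \<le> A + 1" "across dr B" | (adjacent) "dl \<le> A + 1" "B \<le> dr + 1"
    by blast
  then show ?thesis
  proof cases
    case crossing
    have "dl + 2 \<le> B" "A + 2 \<le> dr"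
      using not_right_closed_nbhd_far[OF _ assms(3) not_right] not_left_closed_nbhd_far[OF _ not_left]
        across_bounds crossing by fastforce+
    then have "across dr dl"
      using across_uncross[of A dr dl B] crossing by simp
    then show ?thesis
      using union_right_closed_crossing crossing by blast
  next
    case mixed
    have "dl + 2 \<le> B"
      using not_right_closed_nbhd_far[OF _ assms(3) not_right] across_bounds mixed by fastforce
    then have "left_closed b A (nbhd dr)"
      using left_closed_nbhd_across[OF \<open>across A dl\<close>] mixed across_bounds[OF \<open>across A dl\<close>] by simp
    with not_left show ?thesis
      by blast
  next
    case outside
    have "A + 2 \<le> dr"
      using not_left_closed_nbhd_far[OF _ not_left] across_bounds outside by fastforce
    then show ?thesis
      using union_right_closed_outside outside by simp
  next
    case adjacent
    show ?thesis
    proof (cases "b + 1 < dr")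
      case True
      then obtain m where "A < m" "across m dr"
        using not_left_closed_nbhd_across[OF not_left] by blast
      then show ?thesis
        using union_right_closed_adjacent[OF assms(5,2)] adjacent by simp
    next
      case False
      then have "{b..B} \<subseteq> nbhd dr"
        using adjacent_in_nbhd[of _ dr] adjacent assms(3) nbhd_memD[OF assms(5)] by auto
      then show ?thesis
        by (rule right_closed_union_cover)
    qed
  qed
qed

lemma union_left_closed:
  assumes "A \<le> b" "b \<le> B" "B \<le> n" "dl \<in> nbhd A" "dr \<in> nbhd B"
    and "\<not> right_closed b B (nbhd dl)" "\<not> left_closed b A (nbhd dr)"
  shows "left_closed b A (nbhd dl \<union> nbhd dr)"
proof -
  interpret reflected: funnel_graph n "n - b" "reflect_rel n across"
    by (rule funnel_graph_reflect)
  have "dl \<le> n" "dr \<le> n"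
    using assms(4,5) nbhd_memD by auto
  have reflected_nbhd: "reflected.nbhd (n - d) = (\<lambda>x. n - x) ` nbhd d" if "d \<le> n" for d
    using nbhd_reflect[OF that] .
  have "right_closed (n - b) (n - A) (reflected.nbhd (n - dr) \<union> reflected.nbhd (n - dl))"
  proof (rule reflected.union_right_closed)
    show "n - dr \<in> reflected.nbhd (n - B)" "n - dl \<in> reflected.nbhd (n - A)"
      using assms reflected_nbhd \<open>dl \<le> n\<close> \<open>dr \<le> n\<close> mem_reflect_image[OF nbhd_subset] by auto
    show "\<not> right_closed (n - b) (n - A) (reflected.nbhd (n - dr))"
      using assms left_closed_reflect[OF nbhd_subset] reflected_nbhd \<open>dr \<le> n\<close> bottom_bounds by simp
    show "\<not> left_closed (n - b) (n - B) (reflected.nbhd (n - dl))"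
      using assms right_closed_reflect[OF nbhd_subset] reflected_nbhd \<open>dl \<le> n\<close> bottom_bounds by simp
  qed (use assms in auto)
  then show ?thesis
    using left_closed_reflect[of "nbhd dl \<union> nbhd dr" n b A] reflected_nbhd \<open>dl \<le> n\<close> \<open>dr \<le> n\<close>
      nbhd_subset assms bottom_bounds by (simp add: image_Un Un_commute)
qed

theorem nbhd_closed_choice:
  assumes "A \<le> b" "b \<le> B" "B \<le> n" "dl \<in> nbhd A" "dr \<in> nbhd B"
  shows "left_closed b A (nbhd dl) \<and> right_closed b B (nbhd dl)
       \<or> left_closed b A (nbhd dr) \<and> right_closed b B (nbhd dr)
       \<or> left_closed b A (nbhd dl \<union> nbhd dr) \<and> right_closed b B (nbhd dl \<union> nbhd dr)"
  using left_closed_nbhd[OF assms(1,4)] right_closed_nbhd[OF assms(2,3,5)]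
    union_left_closed[OF assms] union_right_closed[OF assms] by blast

end

lemma left_closed_diff_interval:
  assumes "left_closed b A X" "A \<le> b" "b \<notin> X"
  obtains a where "A \<le> a" "a \<le> b" "{A..b} - X = {a..b}"
proof
  define a where "a = Min ({A..b} - X)"
  have "finite ({A..b} - X)" "b \<in> {A..b} - X"
    using assms by simp_all
  then have a: "a \<in> {A..b} - X" and a_le: "\<And>x. x \<in> {A..b} - X \<Longrightarrow> a \<le> x"
    unfolding a_def using Min_in Min_le by blast+
  then show a_bounds: "A \<le> a" "a \<le> b"
    by simp_all
  have "x \<notin> X" if "a \<le> x" "x \<le> b" for x
  proof
    assume "x \<in> X"
    then have "a \<in> X"
      using assms(1) a_bounds(1) that unfolding left_closed_def by blast
    then show False
      using a by simp
  qed
  then show "{A..b} - X = {a..b}"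
    using a_bounds a_le by auto
qed

lemma right_closed_diff_interval:
  assumes "right_closed b B X" "b \<le> B" "b \<notin> X"
  obtains c where "b \<le> c" "c \<le> B" "{b..B} - X = {b..c}"
proof
  define c where "c = Max ({b..B} - X)"
  have "finite ({b..B} - X)" "b \<in> {b..B} - X"
    using assms by simp_all
  then have c: "c \<in> {b..B} - X" and le_c: "\<And>x. x \<in> {b..B} - X \<Longrightarrow> x \<le> c"
    unfolding c_def using Max_in Max_ge by blast+
  then show c_bounds: "b \<le> c" "c \<le> B"
    by simp_all
  have "x \<notin> X" if "b \<le> x" "x \<le> c" for x
  proof
    assume "x \<in> X"
    then have "\<forall>j. b \<le> x \<and> x \<le> j \<and> j \<le> B \<longrightarrow> j \<in> X"
      using assms(1) unfolding right_closed_def by blast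
    then have "c \<in> X"
      using c_bounds(2) that by blast
    then show False
      using c by simp
  qed
  then show "{b..B} - X = {b..c}"
    using c_bounds le_c by auto
qed

lemma chainL_atLeastAtMost: "a \<le> b \<Longrightarrow> chainL b (int (b - a)) = {a..b}"
  unfolding chainL_def by auto

lemma chainR_atLeastAtMost: "b \<le> c \<Longrightarrow> chainR b (int (c - b)) = {b..c}"
  unfolding chainR_def by auto

lemma closed_diff_is_base:
  assumes "A \<le> b" "b \<le> B" "B \<le> n" "left_closed b A X" "right_closed b B X"
  shows "is_base n b ({A..B} - X)"
proof (cases "b \<in> X")
  case True
  have "k \<in> X" if "A \<le> k" "k \<le> B" for k
  proof (cases "k \<le> b")
    case True
    then show ?thesis
      using assms(4) \<open>b \<in> X\<close> that unfolding left_closed_def by blast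
  next
    case False
    then show ?thesis
      using assms(5) \<open>b \<in> X\<close> that unfolding right_closed_def by auto
  qed
  then have "{A..B} - X = chainL b (-1) \<union> chainR b (-1)"
    unfolding chainL_def chainR_def by auto
  then show ?thesis
    unfolding is_base_def by (intro exI[of _ "-1"]) simp
next
  case False
  obtain a where a: "A \<le> a" "a \<le> b" "{A..b} - X = {a..b}"
    using left_closed_diff_interval[OF assms(4,1) False] .
  obtain c where c: "b \<le> c" "c \<le> B" "{b..B} - X = {b..c}"
    using right_closed_diff_interval[OF assms(5,2) False] .
  have "{A..B} - X = ({A..b} - X) \<union> ({b..B} - X)"
    using assms(1,2) by auto
  also have "\<dots> = chainL b (int (b - a)) \<union> chainR b (int (c - b))"
    unfolding a(3) c(3) chainL_atLeastAtMost[OF a(2)] chainR_atLeastAtMost[OF c(1)] ..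
  finally have "{A..B} - X = chainL b (int (b - a)) \<union> chainR b (int (c - b))" .
  moreover have "int (b - a) \<le> int b" "int (c - b) \<le> int (n - b)"
    using c(2) assms(3) by simp_all
  ultimately show ?thesis
    unfolding is_base_def by (intro exI[of _ "int (b - a)"] exI[of _ "int (c - b)"]) simp
qed

sublocale funnel_terrain \<subseteq> funnel_graph n b across
proof
  show "across (b - 1) (b + 1)"
    using bottom unfolding across_def by simp
qed (fact across_bounds across_right_convex across_left_convex across_uncross)+

context funnel_terrain
begin

lemma closed_nbhd_eq_nbhd: "closed_nbhd p n d = nbhd d"
proof (rule set_eqI)
  fix u
  have "sees p u d \<or> sees p d u \<longleftrightarrow> u \<noteq> d \<and> u \<le> d + 1 \<and> d \<le> u + 1 \<or> across u d \<or> across d u"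
    if "u \<le> n" "d \<le> n"
    using sees_iff_adjacent_or_across[of u d] sees_iff_adjacent_or_across[of d u] that
      across_bounds[of u d] across_bounds[of d u]
    by (cases u d rule: linorder_cases) (auto simp: sees_def)
  then show "u \<in> closed_nbhd p n d \<longleftrightarrow> u \<in> nbhd d"
    unfolding closed_nbhd_def vis_edge_def nbhd_def by auto
qed

end

theorem lemma16:
  fixes p :: "nat \<Rightarrow> real \<times> real" and n b l r dl dr :: nat
  assumes "funnel p n b"
    and "l \<le> b" and "r \<le> n - b"
    and "W = chainL b (int l) \<union> chainR b (int r)"
    and "dl \<in> closed_nbhd p n (b - l)"
    and "dr \<in> closed_nbhd p n (b + r)"
  shows "is_base n b (W - closed_nbhd p n dl) \<or> is_base n b (W - closed_nbhd p n dr)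
         \<or> is_base n b (W - (closed_nbhd p n dl \<union> closed_nbhd p n dr))"
proof -
  interpret funnel_terrain p n b
    using assms(1) by unfold_locales
  have bounds: "b - l \<le> b" "b \<le> b + r" "b + r \<le> n"
    using assms(3) bottom_bounds by auto
  have "W = {b - l..b + r}"
    using assms(2,4) unfolding chainL_def chainR_def by auto
  then show ?thesis
    using nbhd_closed_choice[OF bounds, of dl dr] closed_diff_is_base[OF bounds] assms(5,6)
    unfolding closed_nbhd_eq_nbhd by blast
qed

end
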